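(* There is an absolute constant $c>0$ such that the following holds. Let $n\ge5$ be odd, $k=\frac{n-3}{2}$, $G=(V,E)=K_n$, let $C=(v_1,\dots,v_{2k+1})$ be a cycle of length $n-2$ in $G$ with $s,t$ the two vertices not on $C$, and let $F$ be the facet of $P_{(\widehat G,\widehat R)}$ defined by the canonical transformation of the $C$-induced constraint $x_{\{s,t\}}+k\cdot x(\delta(V(C)))+\sum_{e\in E[V\setminus\{s,t\}]}\ell(e)x_e\ge 2k+1$. Then there exist $\widehat a\in\mathbb{Z}^{\widehat E}$ and $\widehat b\in\mathbb{Z}$ such that $F=\{y\in P_{(\widehat G,\widehat R)}\colon \widehat a^\top y=\widehat b\}$ and $|\{\widehat a_{\widehat e}\colon\widehat e\in\widehat E\}|\le c\,n^{2/3}$.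
   Context: $\delta(V(C))$ is the set of edges with exactly one endpoint on $C$, $E[S]$ the set of edges with both endpoints in $S$, $x(S)=\sum_{e\in S}x_e$; for $i\ne j$, $\ell(\{v_i,v_j\})=|j-i|$ if $|j-i|$ is odd and $2k+1-|j-i|$ otherwise. The bipartite graph $\widehat G=(\widehat V,\widehat E)$ has vertex set $\{v^+\colon v\in V\}\cup\{v^-\colon v\in V\}$ and edges $\{v^+,v^-\}$ for $v\in V$ and $\{u^+,v^-\},\{u^-,v^+\}$ for each $\{u,v\}\in E$; red edges $\widehat R=\widehat E\setminus\{\{v^+,v^-\}\colon v\in V\}$. $P_{(\widehat G,\widehat R)}$ is the convex hull of incidence vectors of perfect matchings $M$ of $\widehat G$ with $|M\cap\widehat R|$ odd. The canonical transformation of $\sum_{e\in E}a_ex_e\ge b$ is $\sum_{\{u,v\}\in E}a_{\{u,v\}}(y_{\{u^+,v^-\}}+y_{\{u^-,v^+\}})\ge b$. (This canonical transformation defines a facet of $P_{(\widehat G,\widehat R)}$.) *)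

theory Defs
  imports Complex_Main
begin

definition Kn_edges :: "nat set \<Rightarrow> nat set set" where
  "Kn_edges V = {e. e \<subseteq> V \<and> card e = 2}"

definition cut_edges :: "nat set set \<Rightarrow> nat set \<Rightarrow> nat set set" where
  "cut_edges E S = {e \<in> E. card (e \<inter> S) = 1}"

definition induced_edges :: "nat set set \<Rightarrow> nat set \<Rightarrow> nat set set" where
  "induced_edges E S = {e \<in> E. e \<subseteq> S}"

definition cyc_len :: "nat \<Rightarrow> (nat \<Rightarrow> nat) \<Rightarrow> nat set \<Rightarrow> nat" where
  "cyc_len k v e = (THE d. \<exists>i j. i \<in> {1..2*k+1} \<and> j \<in> {1..2*k+1} \<and> i \<noteq> j \<and>
      e = {v i, v j} \<and>
      d = (let m = (if i \<le> j then j - i else i - j) in if odd m then m else 2*k+1 - m))"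

(* Bipartite graph hat G: v^+ = (v, True), v^- = (v, False) *)
definition hat_vertices :: "nat set \<Rightarrow> (nat \<times> bool) set" where
  "hat_vertices V = V \<times> UNIV"

definition hat_edges :: "nat set \<Rightarrow> nat set set \<Rightarrow> (nat \<times> bool) set set" where
  "hat_edges V E = {{(v, True), (v, False)} | v. v \<in> V}
     \<union> {{(u, True), (v, False)} | u v. {u, v} \<in> E}
     \<union> {{(u, False), (v, True)} | u v. {u, v} \<in> E}"

definition red_edges :: "nat set \<Rightarrow> nat set set \<Rightarrow> (nat \<times> bool) set set" where
  "red_edges V E = hat_edges V E - {{(v, True), (v, False)} | v. v \<in> V}"

definition perfect_matching :: "'b set \<Rightarrow> 'b set set \<Rightarrow> 'b set set \<Rightarrow> bool" where
  "perfect_matching VV EE M \<longleftrightarrow> M \<subseteq> EE \<and> (\<forall>x\<in>VV. \<exists>!e. e \<in> M \<and> x \<in> e)"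

definition incidence :: "'b set \<Rightarrow> 'b \<Rightarrow> real" where
  "incidence M = (\<lambda>e. if e \<in> M then 1 else 0)"

definition conv_hull_fun :: "('b \<Rightarrow> real) set \<Rightarrow> ('b \<Rightarrow> real) set" where
  "conv_hull_fun S = {y. \<exists>T w. finite T \<and> T \<subseteq> S \<and> (\<forall>x\<in>T. w x \<ge> 0) \<and> sum w T = 1
      \<and> y = (\<lambda>e. \<Sum>x\<in>T. w x * x e)}"

definition P_hat :: "nat set \<Rightarrow> nat set set \<Rightarrow> ((nat \<times> bool) set \<Rightarrow> real) set" where
  "P_hat V E = conv_hull_fun {incidence M | M.
      perfect_matching (hat_vertices V) (hat_edges V E) M \<and> odd (card (M \<inter> red_edges V E))}"

(* canonical transformation of sum_{e in E} a_e x_e: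
   sum_{{u,v} in E} a_{{u,v}} (y_{{u+,v-}} + y_{{u-,v+}}) *)
definition canon_lhs :: "nat set set \<Rightarrow> (nat set \<Rightarrow> real) \<Rightarrow> ((nat \<times> bool) set \<Rightarrow> real) \<Rightarrow> real" where
  "canon_lhs E a y = (\<Sum>e\<in>E. a e * (\<Sum>p\<in>e. \<Sum>q\<in>e - {p}. y {(p, True), (q, False)}))"

definition C_induced_coeff :: "nat set \<Rightarrow> nat \<Rightarrow> (nat \<Rightarrow> nat) \<Rightarrow> nat \<Rightarrow> nat \<Rightarrow> nat set \<Rightarrow> real" where
  "C_induced_coeff V k v s t e =
     (if e = {s, t} then 1 else 0)
     + real k * (if e \<in> cut_edges (Kn_edges V) (v ` {1..2*k+1}) then 1 else 0)
     + (if e \<in> induced_edges (Kn_edges V) (V - {s, t}) then real (cyc_len k v e) else 0)"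

end

theory Submission
  imports Defs
begin

(* On the perfect matching polytope of the bipartite double cover every vertex is covered
   exactly once, so adding a node potential -- alpha u on every edge {u+, w-} at u+ and
   - alpha w at w- -- changes the left-hand side of every equation only by the constant
   sum alpha - sum alpha = 0; the face is unchanged. Numbering the cycle vertices
   i = p^2 d + p b + c in base p with p ~ n^(1/3), the potential X i = c - p^2 d makes
   X i - i = -2 p^2 d - p b and X i + i = 2 c + p b depend on two bounded digits only. Since
   l(v_i, v_j) is one of +-(j - i) and m +- (j - i) with m = n - 2, every shifted cycle coefficient
   l + X i - X j is an affine function of a pair of integers in [-p, p] from one of four
   families, and similarly for the edges at s and t. Hence there are O(p^2) = O(n^(2/3))
   distinct coefficients. *)

lemma conv_hull_fun_linear_eq:
  assumes "\<And>x. x \<in> S \<Longrightarrow> (\<Sum>e\<in>A. c e * x e) = b" and "y \<in> conv_hull_fun S"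
  shows "(\<Sum>e\<in>A. c e * y e) = b"
proof -
  obtain T w where T: "T \<subseteq> S" "sum w T = 1" and y: "y = (\<lambda>e. \<Sum>x\<in>T. w x * x e)"
    using assms(2) unfolding conv_hull_fun_def by blast
  have "(\<Sum>e\<in>A. c e * y e) = (\<Sum>x\<in>T. w x * (\<Sum>e\<in>A. c e * x e))"
    unfolding y by (simp add: sum_distrib_left sum.swap[of _ A] algebra_simps)
  also have "\<dots> = (\<Sum>x\<in>T. w x * b)"
    using T(1) assms(1) by (intro sum.cong) auto
  finally show ?thesis
    using T(2) by (simp add: sum_distrib_right[symmetric])
qed

lemma perfect_matching_degree:
  assumes "perfect_matching VV EE M" "finite EE" "x \<in> VV"
  shows "(\<Sum>e\<in>{e \<in> EE. x \<in> e}. incidence M e) = 1"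
proof -
  obtain e0 where "e0 \<in> M" "x \<in> e0" "\<And>e. e \<in> M \<Longrightarrow> x \<in> e \<Longrightarrow> e = e0"
    using assms(1,3) unfolding perfect_matching_def by blast
  then have "{e \<in> EE. x \<in> e} \<inter> M = {e0}"
    using assms(1) unfolding perfect_matching_def by blast
  then show ?thesis
    using assms(2) by (simp add: incidence_def sum.If_cases)
qed

lemma perfect_matching_potential:
  assumes "perfect_matching VV EE M" "finite VV" "finite EE" "\<And>e. e \<in> EE \<Longrightarrow> e \<subseteq> VV"
  shows "(\<Sum>e\<in>EE. (\<Sum>x\<in>e. \<beta> x) * incidence M e) = (\<Sum>x\<in>VV. \<beta> x)"
proof -
  have "(\<Sum>e\<in>EE. (\<Sum>x\<in>e. \<beta> x) * incidence M e) = (\<Sum>e\<in>EE. \<Sum>x\<in>{x \<in> VV. x \<in> e}. \<beta> x * incidence M e)"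
  proof (rule sum.cong[OF refl])
    fix e assume "e \<in> EE"
    then have "{x \<in> VV. x \<in> e} = e" using assms(4) by blast
    then show "(\<Sum>x\<in>e. \<beta> x) * incidence M e = (\<Sum>x\<in>{x \<in> VV. x \<in> e}. \<beta> x * incidence M e)"
      by (simp add: sum_distrib_right)
  qed
  also have "\<dots> = (\<Sum>x\<in>VV. \<Sum>e\<in>{e \<in> EE. x \<in> e}. \<beta> x * incidence M e)"
    using assms(3,2) by (rule sum.swap_restrict)
  also have "\<dots> = (\<Sum>x\<in>VV. \<beta> x * (\<Sum>e\<in>{e \<in> EE. x \<in> e}. incidence M e))"
    by (simp add: sum_distrib_left)
  also have "\<dots> = (\<Sum>x\<in>VV. \<beta> x)"
    using perfect_matching_degree[OF assms(1,3)] by simp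
  finally show ?thesis .
qed

definition hat_edge :: "nat \<Rightarrow> nat \<Rightarrow> (nat \<times> bool) set" where
  "hat_edge u w = {(u, True), (w, False)}"

lemma hat_edge_eq_iff [simp]: "hat_edge u w = hat_edge u' w' \<longleftrightarrow> u = u' \<and> w = w'"
  unfolding hat_edge_def by (auto simp: doubleton_eq_iff)

lemma inj_on_hat_edge: "inj_on (\<lambda>(u, w). hat_edge u w) A"
  by (auto simp: inj_on_def)

lemma Kn_edges_iff: "{u, w} \<in> Kn_edges V \<longleftrightarrow> u \<in> V \<and> w \<in> V \<and> u \<noteq> w"
  unfolding Kn_edges_def by (auto simp: card_2_iff)

lemma hat_edges_Kn_edges: "hat_edges V (Kn_edges V) = (\<lambda>(u, w). hat_edge u w) ` (V \<times> V)"
proof -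
  have "{(u, False), (w, True)} = hat_edge w u" for u w
    by (auto simp: hat_edge_def)
  moreover have "hat_edge u w \<in> hat_edges V (Kn_edges V)" if "u \<in> V" "w \<in> V" for u w
    using that by (cases "u = w") (auto simp: hat_edges_def hat_edge_def Kn_edges_iff)
  ultimately show ?thesis
    unfolding hat_edges_def by (fastforce simp: Kn_edges_iff hat_edge_def[symmetric])
qed

lemma sum_hat_edges_Kn_edges:
  "(\<Sum>e\<in>hat_edges V (Kn_edges V). f e) = (\<Sum>(u, w)\<in>V \<times> V. f (hat_edge u w))"
  unfolding hat_edges_Kn_edges by (subst sum.reindex[OF inj_on_hat_edge]) (simp add: case_prod_unfold)

lemma canon_lhs_Kn_edges:
  assumes "finite V"
  shows "canon_lhs (Kn_edges V) a y =
    (\<Sum>(u, w)\<in>V \<times> V. (if u = w then 0 else a {u, w}) * y (hat_edge u w))"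
proof -
  let ?Off = "{z \<in> V \<times> V. fst z \<noteq> snd z}"
  let ?edge = "\<lambda>z. {fst z, snd z}"
  let ?h = "\<lambda>z. a (?edge z) * y (hat_edge (fst z) (snd z))"
  have fin: "finite ?Off" "finite (Kn_edges V)"
    using assms unfolding Kn_edges_def by (auto intro: finite_subset[of _ "Pow V"])
  have "canon_lhs (Kn_edges V) a y = (\<Sum>e\<in>Kn_edges V. \<Sum>z\<in>{z \<in> ?Off. ?edge z = e}. ?h z)"
    unfolding canon_lhs_def
  proof (rule sum.cong[OF refl])
    fix e assume "e \<in> Kn_edges V"
    then obtain u w where uw: "u \<in> V" "w \<in> V" "u \<noteq> w" "e = {u, w}"
      unfolding Kn_edges_def by (auto simp: card_2_iff)
    have "{z \<in> ?Off. ?edge z = e} = {(u, w), (w, u)}"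
      using uw by (auto simp: doubleton_eq_iff)
    moreover have "{u, w} - {u} = {w}" "{u, w} - {w} = {u}"
      using uw(3) by auto
    ultimately show "a e * (\<Sum>p\<in>e. \<Sum>q\<in>e - {p}. y {(p, True), (q, False)}) =
        (\<Sum>z\<in>{z \<in> ?Off. ?edge z = e}. ?h z)"
      using uw by (simp add: hat_edge_def insert_commute algebra_simps)
  qed
  also have "\<dots> = (\<Sum>z\<in>?Off. ?h z)"
    by (rule sum.group[OF fin]) (auto simp: Kn_edges_iff)
  also have "\<dots> = (\<Sum>z\<in>V \<times> V. if fst z \<noteq> snd z then ?h z else 0)"
    using assms by (simp add: sum.inter_filter)
  also have "\<dots> = (\<Sum>(u, w)\<in>V \<times> V. (if u = w then 0 else a {u, w}) * y (hat_edge u w))"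
    by (intro sum.cong) auto
  finally show ?thesis .
qed

lemma P_hat_Kn_potential:
  assumes "finite V" "y \<in> P_hat V (Kn_edges V)"
  shows "(\<Sum>(u, w)\<in>V \<times> V. (\<alpha> u - \<alpha> w) * y (hat_edge u w)) = 0"
proof -
  define \<beta> where "\<beta> x = (if snd x then \<alpha> (fst x) else - \<alpha> (fst x))" for x
  let ?H = "hat_edges V (Kn_edges V)"
  have fin: "finite (hat_vertices V)" "finite ?H"
    using assms(1) by (simp_all add: hat_vertices_def hat_edges_Kn_edges)
  have sub: "e \<subseteq> hat_vertices V" if "e \<in> ?H" for e
    using that by (auto simp: hat_edges_Kn_edges hat_edge_def hat_vertices_def)
  have "(\<Sum>e\<in>?H. (\<Sum>x\<in>e. \<beta> x) * y e) = (\<Sum>x\<in>hat_vertices V. \<beta> x)"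
    using assms(2) unfolding P_hat_def
  proof (rule conv_hull_fun_linear_eq[rotated])
    fix x assume "x \<in> {incidence M |M. perfect_matching (hat_vertices V) ?H M
        \<and> odd (card (M \<inter> red_edges V (Kn_edges V)))}"
    then obtain M where "perfect_matching (hat_vertices V) ?H M" "x = incidence M"
      by blast
    then show "(\<Sum>e\<in>?H. (\<Sum>x\<in>e. \<beta> x) * x e) = (\<Sum>x\<in>hat_vertices V. \<beta> x)"
      using perfect_matching_potential[OF _ fin sub] by blast
  qed
  also have "\<dots> = (\<Sum>u\<in>V. \<Sum>b\<in>UNIV. \<beta> (u, b))"
    unfolding hat_vertices_def by (simp add: sum.cartesian_product)
  also have "\<dots> = 0"
    by (simp add: \<beta>_def UNIV_bool)
  finally show ?thesis
    by (simp add: sum_hat_edges_Kn_edges hat_edge_def \<beta>_def)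
qed

definition arc_coeff :: "(nat \<Rightarrow> nat \<Rightarrow> int) \<Rightarrow> (nat \<times> bool) set \<Rightarrow> int" where
  "arc_coeff W e = W (THE u. (u, True) \<in> e) (THE w. (w, False) \<in> e)"

lemma arc_coeff_hat_edge [simp]: "arc_coeff W (hat_edge u w) = W u w"
  unfolding arc_coeff_def hat_edge_def by simp

definition potential_shift :: "(nat set \<Rightarrow> real) \<Rightarrow> (nat \<Rightarrow> int) \<Rightarrow> nat \<Rightarrow> nat \<Rightarrow> int" where
  "potential_shift a \<alpha> u w = (if u = w then 0 else \<lfloor>a {u, w}\<rfloor>) + \<alpha> u - \<alpha> w"

lemma canon_face_eq_potential_shift:
  assumes "finite V" "\<And>e. a e \<in> \<int>"
  shows "{y \<in> P_hat V (Kn_edges V). canon_lhs (Kn_edges V) a y = b} =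
    {y \<in> P_hat V (Kn_edges V).
      (\<Sum>e\<in>hat_edges V (Kn_edges V). of_int (arc_coeff (potential_shift a \<alpha>) e) * y e) = b}"
proof -
  have "(\<Sum>e\<in>hat_edges V (Kn_edges V). of_int (arc_coeff (potential_shift a \<alpha>) e) * y e) =
      canon_lhs (Kn_edges V) a y" if "y \<in> P_hat V (Kn_edges V)" for y
  proof -
    have "real_of_int (potential_shift a \<alpha> u w) * y (hat_edge u w) =
        (if u = w then 0 else a {u, w}) * y (hat_edge u w) + (\<alpha> u - \<alpha> w) * y (hat_edge u w)" for u w
      using assms(2)[of "{u, w}"] by (auto simp: potential_shift_def algebra_simps elim: Ints_cases)
    then show ?thesis
      using P_hat_Kn_potential[OF assms(1) that, of "\<lambda>u. real_of_int (\<alpha> u)"]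
      by (simp add: sum_hat_edges_Kn_edges canon_lhs_Kn_edges[OF assms(1)] sum.distrib case_prod_unfold)
  qed
  then show ?thesis
    by (intro Collect_cong) auto
qed

lemma exists_cube_between:
  fixes m :: nat
  assumes "1 \<le> m"
  shows "\<exists>p\<ge>1. m \<le> p ^ 3 \<and> p ^ 3 \<le> 8 * m"
proof -
  define p where "p = (LEAST p. m \<le> p ^ 3)"
  have "m \<le> m ^ 3"
    using assms by (intro self_le_power) auto
  then have m_le: "m \<le> p ^ 3"
    unfolding p_def by (rule LeastI)
  then have "p \<noteq> 0"
    using assms by (intro notI) simp
  moreover have "p ^ 3 \<le> 8 * m"
  proof (cases "p = 1")
    case False
    with \<open>p \<noteq> 0\<close> have "p - 1 < p" "p \<le> 2 * (p - 1)"
      by auto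
    then have "(p - 1) ^ 3 < m"
      unfolding p_def using not_less_Least not_le by blast
    moreover have "p ^ 3 \<le> (2 * (p - 1)) ^ 3"
      using \<open>p \<le> 2 * (p - 1)\<close> by (rule power_mono) simp
    ultimately show ?thesis
      by (simp add: power_mult_distrib)
  qed (use assms in simp)
  ultimately show ?thesis
    using m_le by (auto intro: exI[of _ p])
qed

lemma square_le_of_cube_le:
  fixes p m :: nat
  assumes "p ^ 3 \<le> 8 * m"
  shows "real p ^ 2 \<le> 4 * real m powr (2/3)"
proof -
  define q where "q = root 3 (real m)"
  have "q \<ge> 0" "q ^ 3 = real m"
    unfolding q_def by (simp_all add: real_root_pow_pos2)
  then have "real p ^ 3 \<le> (2 * q) ^ 3"
    using assms by (simp add: power_mult_distrib flip: of_nat_power)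
  then have "real p \<le> 2 * q"
    using \<open>q \<ge> 0\<close> power_mono_iff[of "real p" "2 * q" 3] by simp
  then have "real p ^ 2 \<le> (2 * q) ^ 2"
    by (intro power_mono) auto
  also have "\<dots> = 4 * real m powr (2/3)"
    unfolding q_def by (simp add: root_powr_inverse power2_eq_square flip: powr_add)
  finally show ?thesis .
qed

definition cyc_len_idx :: "nat \<Rightarrow> nat \<Rightarrow> nat \<Rightarrow> nat" where
  "cyc_len_idx m i j = (let d = (if i \<le> j then j - i else i - j) in if odd d then d else m - d)"

definition digit_potential :: "nat \<Rightarrow> nat \<Rightarrow> int" where
  "digit_potential p i = int (i mod p) - int (p * p) * int (i div (p * p))"

definition affine_values :: "nat \<Rightarrow> int \<Rightarrow> int \<Rightarrow> int \<Rightarrow> int set" where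
  "affine_values p \<alpha> \<beta> \<gamma> =
    (\<lambda>(x, y). \<alpha> * x + \<beta> * y + \<gamma>) ` ({- int p..int p} \<times> {- int p..int p})"

lemma finite_affine_values [simp]: "finite (affine_values p \<alpha> \<beta> \<gamma>)"
  by (simp add: affine_values_def)

lemma card_affine_values: "card (affine_values p \<alpha> \<beta> \<gamma>) \<le> (2 * p + 1) ^ 2"
proof -
  have "card {- int p..int p} = 2 * p + 1"
    by (simp add: nat_add_distrib)
  then have "card ({- int p..int p} \<times> {- int p..int p}) = (2 * p + 1) ^ 2"
    by (simp add: card_cartesian_product power2_eq_square)
  then show ?thesis
    unfolding affine_values_def by (metis card_image_le finite_SigmaI finite_atLeastAtMost_int)
qed

lemma affine_valuesI:
  "\<bar>x\<bar> \<le> int p \<Longrightarrow> \<bar>y\<bar> \<le> int p \<Longrightarrow> \<alpha> * x + \<beta> * y + \<gamma> \<in> affine_values p \<alpha> \<beta> \<gamma>"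
  unfolding affine_values_def by (rule image_eqI[of _ _ "(x, y)"]) auto

lemma digit_potential_minus:
  "digit_potential p i - int i = - 2 * int (p * p) * int (i div (p * p)) - int p * int (i div p mod p)"
  and digit_potential_plus:
  "digit_potential p i + int i = 2 * int (i mod p) + int p * int (i div p mod p)"
proof -
  have "int i = int (p * p) * int (i div (p * p)) + int p * int (i div p mod p) + int (i mod p)"
    by (metis add.assoc div_mult_mod_eq mod_mult2_eq mult.commute of_nat_add of_nat_mult)
  then show "digit_potential p i - int i = - 2 * int (p * p) * int (i div (p * p)) - int p * int (i div p mod p)"
    and "digit_potential p i + int i = 2 * int (i mod p) + int p * int (i div p mod p)"
    unfolding digit_potential_def by (simp_all add: algebra_simps)
qed

lemma div_square_le:
  fixes i p :: nat
  assumes "i \<le> p ^ 3"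
  shows "i div (p * p) \<le> p"
proof (cases "p = 0")
  case False
  have "i div (p * p) \<le> p ^ 3 div (p * p)"
    using assms by (rule div_le_mono)
  also have "\<dots> = p"
    using False by (simp add: power3_eq_cube)
  finally show ?thesis .
qed simp

lemma digit_potential_mem_affine_values:
  assumes "0 < p" "i \<le> p ^ 3"
  shows "int k + digit_potential p i \<in> affine_values p 1 (- int (p * p)) (int k)"
    and "int k - digit_potential p i \<in> affine_values p (- 1) (int (p * p)) (int k)"
proof -
  have "i mod p \<le> p" "i div (p * p) \<le> p"
    using assms by (simp_all add: less_imp_le div_square_le)
  then have "1 * int (i mod p) + (- int (p * p)) * int (i div (p * p)) + int k
      \<in> affine_values p 1 (- int (p * p)) (int k)"
    and "(- 1) * int (i mod p) + int (p * p) * int (i div (p * p)) + int k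
      \<in> affine_values p (- 1) (int (p * p)) (int k)"
    by (intro affine_valuesI; simp)+
  then show "int k + digit_potential p i \<in> affine_values p 1 (- int (p * p)) (int k)"
    and "int k - digit_potential p i \<in> affine_values p (- 1) (int (p * p)) (int k)"
    by (simp_all add: digit_potential_def algebra_simps)
qed

lemma cyc_len_idx_plus_digit_potential:
  assumes "0 < p" "i \<le> m" "j \<le> m" "m \<le> p ^ 3"
  shows "int (cyc_len_idx m i j) + digit_potential p i - digit_potential p j \<in>
    affine_values p (2 * int (p * p)) (int p) 0 \<union> affine_values p (int p) 2 0 \<union>
    affine_values p (2 * int (p * p)) (int p) (int m) \<union> affine_values p (int p) 2 (int m)"
proof -
  let ?X = "digit_potential p"
  let ?P1 = "(?X i - int i) - (?X j - int j)"
  let ?P2 = "(?X i + int i) - (?X j + int j)"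
  have P1: "?P1 + c \<in> affine_values p (2 * int (p * p)) (int p) c" for c
  proof -
    have "i div (p * p) \<le> p" "j div (p * p) \<le> p" "i div p mod p \<le> p" "j div p mod p \<le> p"
      using assms by (simp_all add: div_square_le less_imp_le)
    have "?P1 + c = 2 * int (p * p) * (int (j div (p * p)) - int (i div (p * p)))
        + int p * (int (j div p mod p) - int (i div p mod p)) + c"
      using digit_potential_minus[of p i] digit_potential_minus[of p j] by (simp add: algebra_simps)
    also have "\<dots> \<in> affine_values p (2 * int (p * p)) (int p) c"
      using \<open>i div (p * p) \<le> p\<close> \<open>j div (p * p) \<le> p\<close> \<open>i div p mod p \<le> p\<close> \<open>j div p mod p \<le> p\<close>
      by (intro affine_valuesI) auto
    finally show ?thesis .
  qed
  have P2: "?P2 + c \<in> affine_values p (int p) 2 c" for c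
  proof -
    have "i div p mod p \<le> p" "j div p mod p \<le> p" "i mod p \<le> p" "j mod p \<le> p"
      using assms(1) by (simp_all add: less_imp_le)
    have "?P2 + c = int p * (int (i div p mod p) - int (j div p mod p))
        + 2 * (int (i mod p) - int (j mod p)) + c"
      using digit_potential_plus[of p i] digit_potential_plus[of p j] by (simp add: algebra_simps)
    also have "\<dots> \<in> affine_values p (int p) 2 c"
      using \<open>i div p mod p \<le> p\<close> \<open>j div p mod p \<le> p\<close> \<open>i mod p \<le> p\<close> \<open>j mod p \<le> p\<close>
      by (intro affine_valuesI) auto
    finally show ?thesis .
  qed
  have "int (cyc_len_idx m i j) + ?X i - ?X j \<in> {?P1 + 0, ?P2 + 0, ?P1 + int m, ?P2 + int m}"
    using assms(2,3) unfolding cyc_len_idx_def Let_def by (auto simp: of_nat_diff algebra_simps)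
  then show ?thesis
    using P1 P2 by (metis UnI1 UnI2 insertE empty_iff)
qed

definition shifted_coeff_values :: "nat \<Rightarrow> nat \<Rightarrow> nat \<Rightarrow> int set" where
  "shifted_coeff_values p m k = {0, 1} \<union>
     affine_values p (2 * int (p * p)) (int p) 0 \<union> affine_values p (int p) 2 0 \<union>
     affine_values p (2 * int (p * p)) (int p) (int m) \<union> affine_values p (int p) 2 (int m) \<union>
     affine_values p 1 (- int (p * p)) (int k) \<union> affine_values p (- 1) (int (p * p)) (int k)"

lemma finite_shifted_coeff_values [simp]: "finite (shifted_coeff_values p m k)"
  by (simp add: shifted_coeff_values_def)

lemma card_shifted_coeff_values:
  assumes "1 \<le> p"
  shows "card (shifted_coeff_values p m k) \<le> 56 * p ^ 2"
proof -
  let ?c = "(2 * p + 1) ^ 2"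
  have "card (shifted_coeff_values p m k) \<le> card {0, 1::int} + ?c + ?c + ?c + ?c + ?c + ?c"
    unfolding shifted_coeff_values_def
    by (intro order.trans[OF card_Un_le] add_mono card_affine_values order.refl)
  also have "\<dots> \<le> 2 + 6 * (3 * p) ^ 2"
  proof -
    have "?c \<le> (3 * p) ^ 2"
      using assms by (intro power_mono) auto
    then show ?thesis by simp
  qed
  also have "\<dots> \<le> 56 * p ^ 2"
    using assms by (simp add: power_mult_distrib)
  finally show ?thesis .
qed

lemma cyc_len_idx_commute: "cyc_len_idx m i j = cyc_len_idx m j i"
  unfolding cyc_len_idx_def Let_def by auto

lemma cyc_len_eq_cyc_len_idx:
  assumes "inj_on v {1..2*k+1}" "i \<in> {1..2*k+1}" "j \<in> {1..2*k+1}" "i \<noteq> j"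
  shows "cyc_len k v {v i, v j} = cyc_len_idx (2*k+1) i j"
  unfolding cyc_len_def
proof (rule the_equality)
  show "\<exists>i' j'. i' \<in> {1..2*k+1} \<and> j' \<in> {1..2*k+1} \<and> i' \<noteq> j' \<and> {v i, v j} = {v i', v j'} \<and>
      cyc_len_idx (2*k+1) i j = (let m = (if i' \<le> j' then j' - i' else i' - j') in if odd m then m else 2*k+1 - m)"
    using assms(2-4) unfolding cyc_len_idx_def by blast
next
  fix d assume "\<exists>i' j'. i' \<in> {1..2*k+1} \<and> j' \<in> {1..2*k+1} \<and> i' \<noteq> j' \<and> {v i, v j} = {v i', v j'} \<and>
      d = (let m = (if i' \<le> j' then j' - i' else i' - j') in if odd m then m else 2*k+1 - m)"
  then obtain i' j' where ij': "i' \<in> {1..2*k+1}" "j' \<in> {1..2*k+1}" "{v i, v j} = {v i', v j'}"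
    and d: "d = cyc_len_idx (2*k+1) i' j'"
    unfolding cyc_len_idx_def by blast
  have "(i = i' \<and> j = j') \<or> (i = j' \<and> j = i')"
    using ij'(3) assms(1-3) ij'(1,2) by (auto simp: doubleton_eq_iff dest: inj_onD)
  then show "d = cyc_len_idx (2*k+1) i j"
    using d cyc_len_idx_commute by metis
qed

lemma C_induced_coeff_Ints: "C_induced_coeff V k v s t e \<in> \<int>"
  unfolding C_induced_coeff_def by (intro Ints_add Ints_mult) auto

locale C_induced_setting =
  fixes k :: nat and v :: "nat \<Rightarrow> nat" and s t :: nat and V :: "nat set"
  assumes inj_v: "inj_on v {1..2*k+1}"
    and s_notin: "s \<notin> v ` {1..2*k+1}" and t_notin: "t \<notin> v ` {1..2*k+1}"
    and V_eq: "V = v ` {1..2*k+1} \<union> {s, t}"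
begin

lemma finite_V: "finite V"
  by (simp add: V_eq)

lemma C_induced_coeff_cycle:
  assumes "i \<in> {1..2*k+1}" "j \<in> {1..2*k+1}" "i \<noteq> j"
  shows "C_induced_coeff V k v s t {v i, v j} = real (cyc_len_idx (2*k+1) i j)"
proof -
  have "v i \<noteq> v j"
    using assms inj_v by (auto dest: inj_onD)
  then have "{v i, v j} \<in> induced_edges (Kn_edges V) (V - {s, t})"
    using assms s_notin t_notin V_eq by (auto simp: induced_edges_def Kn_edges_iff)
  moreover have "{v i, v j} \<noteq> {s, t}" "{v i, v j} \<notin> cut_edges (Kn_edges V) (v ` {1..2*k+1})"
    using assms s_notin \<open>v i \<noteq> v j\<close> by (auto simp: cut_edges_def doubleton_eq_iff)
  ultimately show ?thesis
    using cyc_len_eq_cyc_len_idx[OF inj_v assms] by (simp add: C_induced_coeff_def)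
qed

lemma C_induced_coeff_cut:
  assumes "i \<in> {1..2*k+1}" "w \<in> {s, t}"
  shows "C_induced_coeff V k v s t {v i, w} = real k"
    and "C_induced_coeff V k v s t {w, v i} = real k"
proof -
  have "v i \<noteq> w" "v i \<notin> {s, t}"
    using assms s_notin t_notin by auto
  then have "{v i, w} \<in> cut_edges (Kn_edges V) (v ` {1..2*k+1})"
    using assms s_notin t_notin V_eq by (auto simp: cut_edges_def Kn_edges_iff)
  moreover have "{v i, w} \<noteq> {s, t}" "{v i, w} \<notin> induced_edges (Kn_edges V) (V - {s, t})"
    using \<open>v i \<notin> {s, t}\<close> assms by (auto simp: induced_edges_def doubleton_eq_iff)
  ultimately show "C_induced_coeff V k v s t {v i, w} = real k"
    by (simp add: C_induced_coeff_def)
  then show "C_induced_coeff V k v s t {w, v i} = real k"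
    by (simp add: insert_commute)
qed

lemma C_induced_coeff_st: "C_induced_coeff V k v s t {s, t} = 1"
proof -
  have "{s, t} \<notin> cut_edges (Kn_edges V) (v ` {1..2*k+1})"
    using s_notin t_notin by (simp add: cut_edges_def)
  moreover have "{s, t} \<notin> induced_edges (Kn_edges V) (V - {s, t})"
    by (simp add: induced_edges_def)
  ultimately show ?thesis
    by (simp add: C_induced_coeff_def)
qed

definition cycle_potential :: "nat \<Rightarrow> nat \<Rightarrow> int" where
  "cycle_potential p u =
    (if u \<in> v ` {1..2*k+1} then digit_potential p (inv_into {1..2*k+1} v u) else 0)"

lemma cycle_potential_cycle [simp]:
  "i \<in> {1..2*k+1} \<Longrightarrow> cycle_potential p (v i) = digit_potential p i"
  using inj_v by (simp add: cycle_potential_def)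

lemma cycle_potential_st [simp]: "w \<in> {s, t} \<Longrightarrow> cycle_potential p w = 0"
  using s_notin t_notin by (auto simp: cycle_potential_def)

abbreviation shifted_coeff :: "nat \<Rightarrow> nat \<Rightarrow> nat \<Rightarrow> int" where
  "shifted_coeff p \<equiv> potential_shift (C_induced_coeff V k v s t) (cycle_potential p)"

lemma shifted_coeff_mem_shifted_coeff_values:
  assumes "u \<in> V" "w \<in> V" "1 \<le> p" "2*k+1 \<le> p ^ 3"
  shows "shifted_coeff p u w \<in> shifted_coeff_values p (2*k+1) k"
proof -
  have index_le: "i \<in> {1..2*k+1} \<Longrightarrow> i \<le> p ^ 3" for i
    using assms(4) by simp
  have from_V: "x \<in> V \<Longrightarrow> (\<exists>i\<in>{1..2*k+1}. x = v i) \<or> x \<in> {s, t}" for x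
    using V_eq by auto
  consider "u = w"
    | i j where "i \<in> {1..2*k+1}" "j \<in> {1..2*k+1}" "i \<noteq> j" "u = v i" "w = v j"
    | i where "i \<in> {1..2*k+1}" "u = v i" "w \<in> {s, t}"
    | j where "j \<in> {1..2*k+1}" "w = v j" "u \<in> {s, t}"
    | "u \<noteq> w" "u \<in> {s, t}" "w \<in> {s, t}"
    using from_V[OF assms(1)] from_V[OF assms(2)] by metis
  then show ?thesis
  proof cases
    case 1
    then show ?thesis
      by (simp add: potential_shift_def shifted_coeff_values_def)
  next
    case 2
    then have "shifted_coeff p u w = int (cyc_len_idx (2*k+1) i j) + digit_potential p i - digit_potential p j"
      using inj_v by (auto simp: potential_shift_def C_induced_coeff_cycle dest: inj_onD)
    also have "\<dots> \<in> affine_values p (2 * int (p * p)) (int p) 0 \<union> affine_values p (int p) 2 0 \<union>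
        affine_values p (2 * int (p * p)) (int p) (int (2*k+1)) \<union> affine_values p (int p) 2 (int (2*k+1))"
      using 2 assms(3,4) by (intro cyc_len_idx_plus_digit_potential) auto
    finally show ?thesis
      unfolding shifted_coeff_values_def by blast
  next
    case 3
    then have "shifted_coeff p u w = int k + digit_potential p i"
      using s_notin t_notin by (auto simp: potential_shift_def C_induced_coeff_cut)
    then show ?thesis
      using digit_potential_mem_affine_values(1)[of p i k] 3(1) assms(3) index_le
      unfolding shifted_coeff_values_def by auto
  next
    case 4
    then have "shifted_coeff p u w = int k - digit_potential p j"
      using s_notin t_notin by (auto simp: potential_shift_def C_induced_coeff_cut)
    then show ?thesis
      using digit_potential_mem_affine_values(2)[of p j k] 4(1) assms(3) index_le
      unfolding shifted_coeff_values_def by auto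
  next
    case 5
    then have "{u, w} = {s, t}"
      by auto
    with 5 show ?thesis
      by (simp add: potential_shift_def C_induced_coeff_st shifted_coeff_values_def)
  qed
qed

lemma card_shifted_coeffs:
  assumes "1 \<le> p" "2*k+1 \<le> p ^ 3"
  shows "card (arc_coeff (shifted_coeff p) ` hat_edges V (Kn_edges V)) \<le> 56 * p ^ 2"
proof -
  have "arc_coeff (shifted_coeff p) ` hat_edges V (Kn_edges V) \<subseteq> shifted_coeff_values p (2*k+1) k"
    using shifted_coeff_mem_shifted_coeff_values[OF _ _ assms] by (auto simp: hat_edges_Kn_edges)
  then show ?thesis
    using card_shifted_coeff_values[OF assms(1)] by (meson card_mono finite_shifted_coeff_values order_trans)
qed

lemma C_induced_face_eq_shifted:
  "{y \<in> P_hat V (Kn_edges V). canon_lhs (Kn_edges V) (C_induced_coeff V k v s t) y = b} =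
    {y \<in> P_hat V (Kn_edges V).
      (\<Sum>e\<in>hat_edges V (Kn_edges V). of_int (arc_coeff (shifted_coeff p) e) * y e) = b}"
  by (rule canon_face_eq_potential_shift[OF finite_V C_induced_coeff_Ints])

end

theorem theorem15:
  "\<exists>c::real. c > 0 \<and>
    (\<forall>(n::nat) (k::nat) (V::nat set) (v::nat \<Rightarrow> nat) (s::nat) (t::nat).
      n \<ge> 5 \<longrightarrow> odd n \<longrightarrow> k = (n - 3) div 2 \<longrightarrow>
      finite V \<longrightarrow> card V = n \<longrightarrow>
      inj_on v {1..2*k+1} \<longrightarrow> s \<noteq> t \<longrightarrow>
      s \<notin> v ` {1..2*k+1} \<longrightarrow> t \<notin> v ` {1..2*k+1} \<longrightarrow>
      V = v ` {1..2*k+1} \<union> {s, t} \<longrightarrow>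
      (let E = Kn_edges V;
           F = {y \<in> P_hat V E. canon_lhs E (C_induced_coeff V k v s t) y = real (2*k+1)}
       in \<exists>(ah :: (nat \<times> bool) set \<Rightarrow> int) (bh :: int).
            F = {y \<in> P_hat V E. (\<Sum>e\<in>hat_edges V E. real_of_int (ah e) * y e) = real_of_int bh}
            \<and> real (card (ah ` hat_edges V E)) \<le> c * real n powr (2/3)))"
proof (rule exI[of _ 224], intro conjI allI impI)
  fix n k :: nat and V :: "nat set" and v :: "nat \<Rightarrow> nat" and s t :: nat
  assume n: "n \<ge> 5" "odd n" "k = (n - 3) div 2" and "finite V" "card V = n"
    and inj: "inj_on v {1..2*k+1}" and "s \<noteq> t"
    and st: "s \<notin> v ` {1..2*k+1}" "t \<notin> v ` {1..2*k+1}" and V: "V = v ` {1..2*k+1} \<union> {s, t}"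
  interpret C_induced_setting k v s t V
    using inj st V by unfold_locales
  have m: "1 \<le> 2*k+1" "2*k+1 \<le> n"
    using n by auto
  obtain p where p: "1 \<le> p" "2*k+1 \<le> p ^ 3" "p ^ 3 \<le> 8 * (2*k+1)"
    using exists_cube_between[OF m(1)] by blast
  let ?ah = "arc_coeff (shifted_coeff p)"
  have "real (card (?ah ` hat_edges V (Kn_edges V))) \<le> 56 * real p ^ 2"
    using card_shifted_coeffs[OF p(1,2)] by (metis of_nat_le_iff of_nat_mult of_nat_numeral of_nat_power)
  also have "\<dots> \<le> 224 * real (2*k+1) powr (2/3)"
    using square_le_of_cube_le[OF p(3)] by simp
  also have "\<dots> \<le> 224 * real n powr (2/3)"
    using m(2) by (simp add: powr_mono2)
  finally show "let E = Kn_edges V;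
           F = {y \<in> P_hat V E. canon_lhs E (C_induced_coeff V k v s t) y = real (2*k+1)}
       in \<exists>(ah :: (nat \<times> bool) set \<Rightarrow> int) (bh :: int).
            F = {y \<in> P_hat V E. (\<Sum>e\<in>hat_edges V E. real_of_int (ah e) * y e) = real_of_int bh}
            \<and> real (card (ah ` hat_edges V E)) \<le> 224 * real n powr (2/3)"
    using C_induced_face_eq_shifted[of "real (2*k+1)" p]
    unfolding Let_def by (intro exI[of _ ?ah] exI[of _ "int (2*k+1)"]) simp
qed simp

end
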